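(* Let $H$ be a binary tree based graph and let ${\bf SAT}(H)$ be the set of satisfying assignments of $\phi_H$. Then $\sum_{S\in{\bf SAT}(H)} (1/2)^{|S\setminus Fix(S)|}=1$.
   Context: Sets of literals never contain a variable together with its negation; $Vars(S)$ is the set of variables occurring in $S$. A rooted tree is extended if none of its leaves has a sibling. A graph $H$ is a binary tree based graph if it is the edge-disjoint union of extended rooted trees $T_1,\dots,T_m$ with roots $t_1,\dots,t_m$ such that every leaf of some $T_i$ is a leaf of exactly two of the trees, and any two trees have at most one common vertex, which is a leaf of both. $T_i,T_j$ are adjacent if they share a leaf $\ell_{i,j}$; $P_{i,j}$ is the path between $t_i$ and $t_j$ in $T_i\cup T_j$. A pseudoedge is a pair $\{t_i,t_j\}$ with $T_i,T_j$ adjacent. $\phi_H$ is the CNF on variables $V(H)$ with a clause $C_{i,j}$ whose literals are the positive literals of $V(P_{i,j})$, for each pseudoedge $\{t_i,t_j\}$. ${\bf SAT}(H)$ is the set of sets $S$ of literals with $Vars(S)=V(H)$ satisfying every clause. For a set $S$ of literals, the positive literal $\ell_{i,j}$ is fixed w.r.t. $S$ if $\ell_{i,j}\in S$ and all other variables of $C_{i,j}$ occur negatively in $S$; $Fix(S)$ is the set of fixed literals. *)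

theory Defs
  imports Complex_Main
begin

definition rooted_tree :: "'v set \<Rightarrow> ('v \<Rightarrow> 'v) \<Rightarrow> 'v \<Rightarrow> bool" where
  "rooted_tree V p r \<longleftrightarrow> finite V \<and> r \<in> V \<and> (\<forall>v \<in> V - {r}. p v \<in> V)
     \<and> (\<forall>v \<in> V. \<exists>k. (p ^^ k) v = r)"

definition tree_edges :: "'v set \<Rightarrow> ('v \<Rightarrow> 'v) \<Rightarrow> 'v \<Rightarrow> 'v set set" where
  "tree_edges V p r = {{v, p v} | v. v \<in> V - {r}}"

definition children :: "'v set \<Rightarrow> ('v \<Rightarrow> 'v) \<Rightarrow> 'v \<Rightarrow> 'v \<Rightarrow> 'v set" where
  "children V p r u = {v \<in> V - {r}. p v = u}"

definition leaves :: "'v set \<Rightarrow> ('v \<Rightarrow> 'v) \<Rightarrow> 'v \<Rightarrow> 'v set" where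
  "leaves V p r = {v \<in> V - {r}. children V p r v = {}}"

definition extended_tree :: "'v set \<Rightarrow> ('v \<Rightarrow> 'v) \<Rightarrow> 'v \<Rightarrow> bool" where
  "extended_tree V p r \<longleftrightarrow> rooted_tree V p r \<and>
     (\<forall>l \<in> leaves V p r. children V p r (p l) = {l})"

text \<open>Vertex set of the path from v up to the root (both included).\<close>
definition to_root :: "('v \<Rightarrow> 'v) \<Rightarrow> 'v \<Rightarrow> 'v \<Rightarrow> 'v set" where
  "to_root p r v = {(p ^^ k) v | k. \<forall>k' < k. (p ^^ k') v \<noteq> r}"

text \<open>Trees T_0, ..., T_(m-1): tree i has vertex set TV i, parent map par i, root rt i.
The graph H is their union.\<close>

definition binary_tree_based ::
  "nat \<Rightarrow> (nat \<Rightarrow> 'v set) \<Rightarrow> (nat \<Rightarrow> 'v \<Rightarrow> 'v) \<Rightarrow> (nat \<Rightarrow> 'v) \<Rightarrow> bool" where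
  "binary_tree_based m TV par rt \<longleftrightarrow>
     (\<forall>i < m. extended_tree (TV i) (par i) (rt i))
   \<and> (\<forall>i < m. \<forall>j < m. i \<noteq> j \<longrightarrow>
        tree_edges (TV i) (par i) (rt i) \<inter> tree_edges (TV j) (par j) (rt j) = {})
   \<and> (\<forall>i < m. \<forall>l \<in> leaves (TV i) (par i) (rt i).
        card {j. j < m \<and> l \<in> leaves (TV j) (par j) (rt j)} = 2)
   \<and> (\<forall>i < m. \<forall>j < m. i \<noteq> j \<longrightarrow>
        card (TV i \<inter> TV j) \<le> 1 \<and>
        TV i \<inter> TV j \<subseteq> leaves (TV i) (par i) (rt i) \<inter> leaves (TV j) (par j) (rt j))"

definition graph_vertices :: "nat \<Rightarrow> (nat \<Rightarrow> 'v set) \<Rightarrow> 'v set" where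
  "graph_vertices m TV = (\<Union>i < m. TV i)"

definition adjacent ::
  "nat \<Rightarrow> (nat \<Rightarrow> 'v set) \<Rightarrow> (nat \<Rightarrow> 'v \<Rightarrow> 'v) \<Rightarrow> (nat \<Rightarrow> 'v) \<Rightarrow> nat \<Rightarrow> nat \<Rightarrow> bool" where
  "adjacent m TV par rt i j \<longleftrightarrow> i < m \<and> j < m \<and> i \<noteq> j \<and>
     leaves (TV i) (par i) (rt i) \<inter> leaves (TV j) (par j) (rt j) \<noteq> {}"

definition shared_leaf ::
  "(nat \<Rightarrow> 'v set) \<Rightarrow> (nat \<Rightarrow> 'v \<Rightarrow> 'v) \<Rightarrow> (nat \<Rightarrow> 'v) \<Rightarrow> nat \<Rightarrow> nat \<Rightarrow> 'v" where
  "shared_leaf TV par rt i j =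
     (THE l. l \<in> leaves (TV i) (par i) (rt i) \<inter> leaves (TV j) (par j) (rt j))"

text \<open>Vertex set of the path P_(i,j) between t_i and t_j in T_i \<union> T_j
 (= variables of clause C_(i,j)).\<close>
definition clause_vars ::
  "(nat \<Rightarrow> 'v set) \<Rightarrow> (nat \<Rightarrow> 'v \<Rightarrow> 'v) \<Rightarrow> (nat \<Rightarrow> 'v) \<Rightarrow> nat \<Rightarrow> nat \<Rightarrow> 'v set" where
  "clause_vars TV par rt i j =
     (let l = shared_leaf TV par rt i j in to_root (par i) (rt i) l \<union> to_root (par j) (rt j) l)"

text \<open>A literal is a pair (x, b): b = True is the positive literal x, b = False its negation.\<close>

definition consistent :: "('v \<times> bool) set \<Rightarrow> bool" where
  "consistent S \<longleftrightarrow> (\<forall>x. \<not> ((x, True) \<in> S \<and> (x, False) \<in> S))"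

definition Vars :: "('v \<times> bool) set \<Rightarrow> 'v set" where
  "Vars S = fst ` S"

definition SAT ::
  "nat \<Rightarrow> (nat \<Rightarrow> 'v set) \<Rightarrow> (nat \<Rightarrow> 'v \<Rightarrow> 'v) \<Rightarrow> (nat \<Rightarrow> 'v) \<Rightarrow> ('v \<times> bool) set set" where
  "SAT m TV par rt = {S. consistent S \<and> Vars S = graph_vertices m TV \<and>
     (\<forall>i j. adjacent m TV par rt i j \<longrightarrow>
        (\<exists>x \<in> clause_vars TV par rt i j. (x, True) \<in> S))}"

definition Fix ::
  "nat \<Rightarrow> (nat \<Rightarrow> 'v set) \<Rightarrow> (nat \<Rightarrow> 'v \<Rightarrow> 'v) \<Rightarrow> (nat \<Rightarrow> 'v) \<Rightarrow> ('v \<times> bool) set \<Rightarrow> ('v \<times> bool) set" where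
  "Fix m TV par rt S = {(l, True) | l. \<exists>i j. adjacent m TV par rt i j \<and>
      l = shared_leaf TV par rt i j \<and> (l, True) \<in> S \<and>
      (\<forall>x \<in> clause_vars TV par rt i j - {l}. (x, False) \<in> S)}"

end

theory Submission
  imports Defs "HOL-Library.FuncSet"
begin

text \<open>Every clause C_ij contains exactly one leaf of H, namely l_ij: the other vertices of the
  path P_ij are inner vertices of T_i or T_j, and a vertex shared by two trees is a leaf of both.
  As a leaf lies in exactly two trees, the clause is also determined by its leaf. So the clauses are
  indexed by the leaves, each owning its leaf as a private variable. Then (1/2)^|S - Fix(S)| splits
  as (1/2)^n, with n the number of inner vertices, times one weight per leaf, and whatever the
  values of the inner vertices, the weights of the two values of a leaf sum to 1. Summing out the
  leaves leaves (1/2)^n * 2^n = 1.\<close>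

lemma sum_PiE_prod_stochastic_weights:
  fixes w :: "'a \<Rightarrow> 'b \<Rightarrow> ('a \<Rightarrow> 'b) \<Rightarrow> 'c::comm_semiring_1"
  assumes "finite N" "finite L" "N \<inter> L = {}"
    and "\<And>l y g g'. l \<in> L \<Longrightarrow> (\<And>x. x \<in> N \<Longrightarrow> g x = g' x) \<Longrightarrow>
      w l y g = w l y g'"
    and "\<And>l g. l \<in> L \<Longrightarrow> (\<Sum>y\<in>B l. w l y g) = 1"
  shows "(\<Sum>g\<in>PiE (N \<union> L) B. \<Prod>l\<in>L. w l (g l) g) = of_nat (card (PiE N B))"
  using assms(2-5)
proof (induction L rule: finite_induct)
  case empty
  then show ?case by simp
next
  case (insert l L)
  have l: "l \<notin> N \<union> L" using insert.hyps insert.prems(1) by blast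
  have agree: "w l' v (g(l := y)) = w l' v g" if "l' \<in> insert l L" for l' v y g
    using that l by (intro insert.prems(2)) auto
  have "(\<Sum>g\<in>PiE (N \<union> insert l L) B. \<Prod>l'\<in>insert l L. w l' (g l') g)
      = (\<Sum>(y, g)\<in>B l \<times> PiE (N \<union> L) B. \<Prod>l'\<in>insert l L. w l' ((g(l := y)) l') (g(l := y)))"
    unfolding Un_insert_right PiE_insert_eq sum.reindex[OF inj_combinator[OF l], unfolded comp_def]
    by (simp only: case_prod_unfold)
  also have "\<dots> = (\<Sum>(y, g)\<in>B l \<times> PiE (N \<union> L) B. w l y g * (\<Prod>l'\<in>L. w l' (g l') g))"
  proof (intro sum.cong refl, clarify)
    fix y g
    have "(\<Prod>l'\<in>insert l L. w l' ((g(l := y)) l') (g(l := y)))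
        = w l ((g(l := y)) l) (g(l := y)) * (\<Prod>l'\<in>L. w l' ((g(l := y)) l') (g(l := y)))"
      using insert.hyps by (rule prod.insert)
    also have "w l ((g(l := y)) l) (g(l := y)) = w l y g"
      using agree by simp
    also have "(\<Prod>l'\<in>L. w l' ((g(l := y)) l') (g(l := y))) = (\<Prod>l'\<in>L. w l' (g l') g)"
      using insert.hyps agree by (intro prod.cong) auto
    finally show "(\<Prod>l'\<in>insert l L. w l' ((g(l := y)) l') (g(l := y)))
        = w l y g * (\<Prod>l'\<in>L. w l' (g l') g)" .
  qed
  also have "\<dots> = (\<Sum>g\<in>PiE (N \<union> L) B. (\<Sum>y\<in>B l. w l y g) * (\<Prod>l'\<in>L. w l' (g l') g))"
    unfolding sum.cartesian_product[symmetric] sum_distrib_right by (rule sum.swap)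
  also have "\<dots> = (\<Sum>g\<in>PiE (N \<union> L) B. \<Prod>l'\<in>L. w l' (g l') g)"
    using insert.prems(3) by simp
  also have "\<dots> = of_nat (card (PiE N B))"
  proof (rule insert.IH)
    show "N \<inter> L = {}" using insert.prems(1) by blast
    show "w l' y g = w l' y g'" if "l' \<in> L" "\<And>x. x \<in> N \<Longrightarrow> g x = g' x" for l' y g g'
      using that by (intro insert.prems(2)) auto
    show "(\<Sum>y\<in>B l'. w l' y g) = 1" if "l' \<in> L" for l' g
      using that by (intro insert.prems(3)) simp
  qed
  finally show ?case .
qed

text \<open>The factor contributed by the private variable \<open>l\<close> of clause \<open>C l\<close> when it takes the value \<open>y\<close>:
  \<open>1\<close> if \<open>l\<close> is fixed, \<open>1/2\<close> if the rest of the clause already satisfies it, \<open>0\<close> if the clause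
  is violated.\<close>

definition leaf_weight :: "('a \<Rightarrow> 'a set) \<Rightarrow> 'a \<Rightarrow> bool \<Rightarrow> ('a \<Rightarrow> bool) \<Rightarrow> real" where
  "leaf_weight C l y g = (if \<exists>x\<in>C l - {l}. g x then 1/2 else if y then 1 else 0)"

lemma sum_leaf_weight: "(\<Sum>y\<in>UNIV. leaf_weight C l y g) = 1"
  by (simp add: leaf_weight_def UNIV_bool)

lemma sat_half_power_eq_prod_leaf_weight:
  assumes "finite N" "finite L" "N \<inter> L = {}" and own: "\<And>l. l \<in> L \<Longrightarrow> l \<in> C l"
  shows "(if \<forall>l\<in>L. \<exists>x\<in>C l. g x
            then (1/2::real) ^ card (N \<union> L - {l\<in>L. g l \<and> (\<forall>x\<in>C l - {l}. \<not> g x)}) else 0)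
         = (1/2) ^ card N * (\<Prod>l\<in>L. leaf_weight C l (g l) g)"
proof (cases "\<forall>l\<in>L. \<exists>x\<in>C l. g x")
  case True
  define F where "F = {l\<in>L. g l \<and> (\<forall>x\<in>C l - {l}. \<not> g x)}"
  have "(\<Prod>l\<in>L. leaf_weight C l (g l) g) = (\<Prod>l\<in>L. if l \<in> F then 1 else 1/2)"
    using True own by (intro prod.cong) (auto simp: leaf_weight_def F_def)
  also have "\<dots> = (1/2) ^ card (L - F)"
    using assms(2) by (simp add: prod.If_cases Diff_eq)
  finally have prod: "(\<Prod>l\<in>L. leaf_weight C l (g l) g) = (1/2) ^ card (L - F)" .
  have "N \<union> L - F = N \<union> (L - F)" "N \<inter> (L - F) = {}"
    using assms(3) by (auto simp: F_def)
  then have "card (N \<union> L - F) = card N + card (L - F)"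
    using assms(1,2) by (simp add: card_Un_disjoint)
  then show ?thesis using True prod by (simp add: power_add F_def)
next
  case False
  then obtain l where "l \<in> L" "\<forall>x\<in>C l. \<not> g x" by blast
  then have "leaf_weight C l (g l) g = 0" using own by (auto simp: leaf_weight_def)
  with \<open>l \<in> L\<close> assms(2) have "(\<Prod>l\<in>L. leaf_weight C l (g l) g) = 0"
    by (meson prod_zero)
  with False show ?thesis by simp
qed

lemma sum_half_power_unfixed_private_clauses:
  fixes C :: "'a \<Rightarrow> 'a set"
  assumes "finite V" "L \<subseteq> V"
    and clause_sub: "\<And>l. l \<in> L \<Longrightarrow> C l \<subseteq> V"
    and clause_Int: "\<And>l. l \<in> L \<Longrightarrow> C l \<inter> L = {l}"
  shows "(\<Sum>g \<in> {g \<in> PiE V (\<lambda>_. UNIV). \<forall>l\<in>L. \<exists>x\<in>C l. g x}.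
            (1/2::real) ^ card (V - {l\<in>L. g l \<and> (\<forall>x\<in>C l - {l}. \<not> g x)})) = 1"
proof -
  define N where "N = V - L"
  have V: "V = N \<union> L" and disj: "N \<inter> L = {}" using assms(2) unfolding N_def by auto
  have fin: "finite N" "finite L" using assms(1) V by auto
  have own: "l \<in> C l" if "l \<in> L" for l using clause_Int[OF that] by blast
  have "(\<Sum>g \<in> PiE (N \<union> L) (\<lambda>_. UNIV). \<Prod>l\<in>L. leaf_weight C l (g l) g)
      = of_nat (card (PiE N (\<lambda>_. UNIV :: bool set)))"
  proof (rule sum_PiE_prod_stochastic_weights[OF fin disj, where w = "leaf_weight C"])
    fix l y and g g' :: "'a \<Rightarrow> bool"
    assume "l \<in> L" "\<And>x. x \<in> N \<Longrightarrow> g x = g' x"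
    then have "(\<exists>x\<in>C l - {l}. g x) \<longleftrightarrow> (\<exists>x\<in>C l - {l}. g' x)"
      using clause_sub clause_Int unfolding N_def by blast
    then show "leaf_weight C l y g = leaf_weight C l y g'" by (simp add: leaf_weight_def)
  qed (rule sum_leaf_weight)
  then have sum_prod: "(\<Sum>g \<in> PiE V (\<lambda>_. UNIV). \<Prod>l\<in>L. leaf_weight C l (g l) g) = 2 ^ card N"
    using fin(1) by (simp add: V card_PiE)
  have "(\<Sum>g \<in> {g \<in> PiE V (\<lambda>_. UNIV). \<forall>l\<in>L. \<exists>x\<in>C l. g x}.
            (1/2::real) ^ card (V - {l\<in>L. g l \<and> (\<forall>x\<in>C l - {l}. \<not> g x)}))
      = (\<Sum>g \<in> PiE V (\<lambda>_. UNIV). if \<forall>l\<in>L. \<exists>x\<in>C l. g x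
           then (1/2::real) ^ card (V - {l\<in>L. g l \<and> (\<forall>x\<in>C l - {l}. \<not> g x)}) else 0)"
    using assms(1) by (intro sum.inter_filter finite_PiE) auto
  also have "\<dots> = (\<Sum>g \<in> PiE V (\<lambda>_. UNIV). (1/2) ^ card N * (\<Prod>l\<in>L. leaf_weight C l (g l) g))"
    unfolding V by (intro sum.cong refl sat_half_power_eq_prod_leaf_weight fin disj own)
  also have "\<dots> = (1/2) ^ card N * 2 ^ card N"
    by (simp add: sum_distrib_left[symmetric] sum_prod)
  also have "\<dots> = 1"
    by (simp flip: power_mult_distrib)
  finally show ?thesis .
qed

definition literals_of :: "'v set \<Rightarrow> ('v \<Rightarrow> bool) \<Rightarrow> ('v \<times> bool) set" where
  "literals_of V g = (\<lambda>x. (x, g x)) ` V"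

lemma mem_literals_of [simp]: "(x, b) \<in> literals_of V g \<longleftrightarrow> x \<in> V \<and> g x = b"
  unfolding literals_of_def by auto

lemma literals_of_Diff: "literals_of V g - literals_of F g = literals_of (V - F) g"
  by auto

lemma card_literals_of: "card (literals_of V g) = card V"
  unfolding literals_of_def by (rule card_image) (auto intro: inj_onI)

lemma inj_on_literals_of: "inj_on (literals_of V) (PiE V B)"
proof (rule inj_onI)
  fix g g' assume g: "g \<in> PiE V B" and g': "g' \<in> PiE V B"
    and eq: "literals_of V g = literals_of V g'"
  have "g x = g' x" if "x \<in> V" for x
  proof -
    have "(x, g x) \<in> literals_of V g'" using that eq[symmetric] by simp
    then show ?thesis by simp
  qed
  then show "g = g'" by (rule PiE_ext[OF g g'])
qed

lemma consistent_mem_iff: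
  assumes "consistent S" "Vars S = V"
  shows "(x, b) \<in> S \<longleftrightarrow> x \<in> V \<and> ((x, True) \<in> S) = b"
proof
  assume "(x, b) \<in> S"
  then show "x \<in> V \<and> ((x, True) \<in> S) = b"
    using assms unfolding consistent_def Vars_def by (cases b) force+
next
  assume "x \<in> V \<and> ((x, True) \<in> S) = b"
  moreover obtain b' where "(x, b') \<in> S"
    using calculation assms(2) unfolding Vars_def by force
  ultimately show "(x, b) \<in> S" by (cases b') auto
qed

lemma consistent_total_eq_literals_of:
  "{S. consistent S \<and> Vars S = V} = literals_of V ` PiE V (\<lambda>_. UNIV)"
proof (intro subset_antisym subsetI)
  fix S assume "S \<in> {S. consistent S \<and> Vars S = V}"
  then have S: "consistent S" "Vars S = V" by auto
  have "S = literals_of V (restrict (\<lambda>x. (x, True) \<in> S) V)"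
  proof (rule set_eqI)
    fix z :: "'a \<times> bool"
    obtain x b where z: "z = (x, b)" by fastforce
    have "z \<in> S \<longleftrightarrow> x \<in> V \<and> ((x, True) \<in> S) = b"
      unfolding z by (rule consistent_mem_iff[OF S])
    also have "\<dots> \<longleftrightarrow> z \<in> literals_of V (restrict (\<lambda>x. (x, True) \<in> S) V)"
      unfolding z by auto
    finally show "z \<in> S \<longleftrightarrow> z \<in> literals_of V (restrict (\<lambda>x. (x, True) \<in> S) V)" .
  qed
  moreover have "restrict (\<lambda>x. (x, True) \<in> S) V \<in> PiE V (\<lambda>_. UNIV)" by simp
  ultimately show "S \<in> literals_of V ` PiE V (\<lambda>_. UNIV)" by (rule rev_image_eqI[rotated])
next
  fix S assume "S \<in> literals_of V ` PiE V (\<lambda>_. UNIV)"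
  then obtain g where "S = literals_of V g" by blast
  moreover have "Vars (literals_of V g) = V"
    unfolding Vars_def literals_of_def by (simp add: image_image)
  ultimately show "S \<in> {S. consistent S \<and> Vars S = V}"
    by (simp add: consistent_def)
qed

lemma in_leavesD: "l \<in> leaves V p r \<Longrightarrow> l \<in> V"
  unfolding leaves_def by blast

lemma rooted_tree_funpow_in:
  assumes "rooted_tree V p r" "v \<in> V" "\<forall>k'<k. (p ^^ k') v \<noteq> r"
  shows "(p ^^ k) v \<in> V"
  using assms(3)
proof (induction k)
  case 0
  then show ?case using assms(2) by simp
next
  case (Suc k)
  then have "(p ^^ k) v \<in> V - {r}" by simp
  then have "p ((p ^^ k) v) \<in> V" using assms(1) unfolding rooted_tree_def by blast
  then show ?case by simp
qed

lemma to_root_subset: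
  assumes "rooted_tree V p r" "v \<in> V"
  shows "to_root p r v \<subseteq> V"
  unfolding to_root_def using rooted_tree_funpow_in[OF assms] by auto

lemma start_in_to_root: "v \<in> to_root p r v"
  unfolding to_root_def by (auto intro!: exI[of _ 0])

lemma to_root_not_leaf:
  assumes "rooted_tree V p r" "v \<in> V" "x \<in> to_root p r v" "x \<noteq> v"
  shows "x \<notin> leaves V p r"
proof -
  obtain k where k: "x = (p ^^ k) v" "\<forall>k'<k. (p ^^ k') v \<noteq> r"
    using assms(3) unfolding to_root_def by blast
  then obtain k' where "k = Suc k'" using assms(4) by (cases k) auto
  with k have "(p ^^ k') v \<in> children V p r x"
    using rooted_tree_funpow_in[OF assms(1,2), of k'] unfolding children_def by auto
  then show ?thesis unfolding leaves_def by blast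
qed

abbreviation tree_leaves ::
  "(nat \<Rightarrow> 'v set) \<Rightarrow> (nat \<Rightarrow> 'v \<Rightarrow> 'v) \<Rightarrow> (nat \<Rightarrow> 'v) \<Rightarrow> nat \<Rightarrow> 'v set" where
  "tree_leaves TV par rt i \<equiv> leaves (TV i) (par i) (rt i)"

definition graph_leaves ::
  "nat \<Rightarrow> (nat \<Rightarrow> 'v set) \<Rightarrow> (nat \<Rightarrow> 'v \<Rightarrow> 'v) \<Rightarrow> (nat \<Rightarrow> 'v) \<Rightarrow> 'v set" where
  "graph_leaves m TV par rt = (\<Union>k<m. tree_leaves TV par rt k)"

text \<open>By \<open>binary_tree_based_clause_vars_eq\<close> below, all clauses with shared leaf \<open>l\<close> coincide, so
  this union is the clause of \<open>l\<close>.\<close>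

definition leaf_clause ::
  "nat \<Rightarrow> (nat \<Rightarrow> 'v set) \<Rightarrow> (nat \<Rightarrow> 'v \<Rightarrow> 'v) \<Rightarrow> (nat \<Rightarrow> 'v) \<Rightarrow> 'v \<Rightarrow> 'v set" where
  "leaf_clause m TV par rt l = \<Union>{clause_vars TV par rt i j | i j.
     adjacent m TV par rt i j \<and> shared_leaf TV par rt i j = l}"

lemma binary_tree_based_rooted_tree:
  "binary_tree_based m TV par rt \<Longrightarrow> i < m \<Longrightarrow> rooted_tree (TV i) (par i) (rt i)"
  unfolding binary_tree_based_def extended_tree_def by blast

lemma finite_graph_vertices:
  assumes "binary_tree_based m TV par rt"
  shows "finite (graph_vertices m TV)"
proof -
  have "finite (TV i)" if "i < m" for i
    using binary_tree_based_rooted_tree[OF assms that] unfolding rooted_tree_def by simp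
  then show ?thesis unfolding graph_vertices_def by simp
qed

lemma graph_leaves_subset_graph_vertices: "graph_leaves m TV par rt \<subseteq> graph_vertices m TV"
  unfolding graph_leaves_def graph_vertices_def by (auto dest: in_leavesD)

lemma binary_tree_based_card_Int:
  "binary_tree_based m TV par rt \<Longrightarrow> i < m \<Longrightarrow> j < m \<Longrightarrow> i \<noteq> j \<Longrightarrow>
    card (TV i \<inter> TV j) \<le> 1"
  unfolding binary_tree_based_def by blast

lemma binary_tree_based_Int_subset_leaves:
  "binary_tree_based m TV par rt \<Longrightarrow> i < m \<Longrightarrow> j < m \<Longrightarrow> i \<noteq> j \<Longrightarrow>
    TV i \<inter> TV j \<subseteq> tree_leaves TV par rt i"
  unfolding binary_tree_based_def by blast

lemma binary_tree_based_card_trees_at_leaf: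
  "binary_tree_based m TV par rt \<Longrightarrow> i < m \<Longrightarrow> l \<in> tree_leaves TV par rt i \<Longrightarrow>
    card {k. k < m \<and> l \<in> tree_leaves TV par rt k} = 2"
  unfolding binary_tree_based_def by blast

lemma binary_tree_based_leaves_Int:
  assumes B: "binary_tree_based m TV par rt" and adj: "adjacent m TV par rt i j"
  shows "tree_leaves TV par rt i \<inter> tree_leaves TV par rt j = {shared_leaf TV par rt i j}"
proof -
  have ij: "i < m" "j < m" "i \<noteq> j" using adj by (auto simp: adjacent_def)
  obtain l where l: "l \<in> tree_leaves TV par rt i \<inter> tree_leaves TV par rt j"
    using adj by (auto simp: adjacent_def)
  have "finite (TV i)"
    using binary_tree_based_rooted_tree[OF B ij(1)] unfolding rooted_tree_def by blast
  then have "finite (TV i \<inter> TV j)" "card (TV i \<inter> TV j) \<le> Suc 0"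
    using binary_tree_based_card_Int[OF B ij] by auto
  then have unique: "a = b" if "a \<in> TV i \<inter> TV j" "b \<in> TV i \<inter> TV j" for a b
    using that card_le_Suc0_iff_eq by blast
  have "x = l" if "x \<in> tree_leaves TV par rt i \<inter> tree_leaves TV par rt j" for x
    using that l by (intro unique) (auto dest: in_leavesD)
  with l have "tree_leaves TV par rt i \<inter> tree_leaves TV par rt j = {l}"
    by blast
  moreover from this have "shared_leaf TV par rt i j = l"
    unfolding shared_leaf_def by auto
  ultimately show ?thesis by simp
qed

lemma binary_tree_based_trees_at_shared_leaf:
  assumes B: "binary_tree_based m TV par rt" and adj: "adjacent m TV par rt i j"
  shows "{k. k < m \<and> shared_leaf TV par rt i j \<in> tree_leaves TV par rt k} = {i, j}"
proof -
  have ij: "i < m" "j < m" "i \<noteq> j" using adj by (auto simp: adjacent_def)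
  have "shared_leaf TV par rt i j \<in> tree_leaves TV par rt i \<inter> tree_leaves TV par rt j"
    using binary_tree_based_leaves_Int[OF assms] by simp
  then have "card {k. k < m \<and> shared_leaf TV par rt i j \<in> tree_leaves TV par rt k} = card {i, j}"
    using binary_tree_based_card_trees_at_leaf[OF B ij(1)] ij(3) by simp
  moreover have "{i, j} \<subseteq> {k. k < m \<and> shared_leaf TV par rt i j \<in> tree_leaves TV par rt k}"
    using ij \<open>shared_leaf TV par rt i j \<in> _\<close> by auto
  ultimately show ?thesis
    by (intro card_subset_eq[symmetric]) auto
qed

lemma clause_vars_commute: "clause_vars TV par rt j i = clause_vars TV par rt i j"
  unfolding clause_vars_def shared_leaf_def by (simp add: Int_commute Un_commute)

lemma shared_leaf_in_clause_vars: "shared_leaf TV par rt i j \<in> clause_vars TV par rt i j"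
  unfolding clause_vars_def Let_def by (simp add: start_in_to_root)

lemma binary_tree_based_clause_vars_eq:
  assumes B: "binary_tree_based m TV par rt"
    and "adjacent m TV par rt i j" "adjacent m TV par rt i' j'"
    and "shared_leaf TV par rt i' j' = shared_leaf TV par rt i j"
  shows "clause_vars TV par rt i' j' = clause_vars TV par rt i j"
proof -
  have "{i', j'} = {i, j}"
    using binary_tree_based_trees_at_shared_leaf[OF B] assms(2-4) by metis
  then have "(i' = i \<and> j' = j) \<or> (i' = j \<and> j' = i)" by (auto simp: doubleton_eq_iff)
  then show ?thesis using clause_vars_commute by metis
qed

lemma shared_leaf_in_graph_leaves:
  assumes "binary_tree_based m TV par rt" and adj: "adjacent m TV par rt i j"
  shows "shared_leaf TV par rt i j \<in> graph_leaves m TV par rt"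
proof -
  have "shared_leaf TV par rt i j \<in> tree_leaves TV par rt i"
    using binary_tree_based_leaves_Int[OF assms] by auto
  moreover have "i < m" using adj by (simp add: adjacent_def)
  ultimately show ?thesis unfolding graph_leaves_def by blast
qed

lemma graph_leaf_shared_leaf:
  assumes B: "binary_tree_based m TV par rt" and l: "l \<in> graph_leaves m TV par rt"
  obtains i j where "adjacent m TV par rt i j" "shared_leaf TV par rt i j = l"
proof -
  obtain i where i: "i < m" "l \<in> tree_leaves TV par rt i"
    using l unfolding graph_leaves_def by blast
  then have "card {k. k < m \<and> l \<in> tree_leaves TV par rt k} = 2"
    by (rule binary_tree_based_card_trees_at_leaf[OF B])
  then obtain j where j: "j < m" "l \<in> tree_leaves TV par rt j" "j \<noteq> i"
    by (metis (mono_tags, lifting) card_2_iff' mem_Collect_eq)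
  then have adj: "adjacent m TV par rt i j" using i by (auto simp: adjacent_def)
  then have "shared_leaf TV par rt i j = l"
    using binary_tree_based_leaves_Int[OF B adj] i(2) j(2) by (metis IntI singletonD)
  with adj show thesis by (rule that)
qed

lemma leaf_clause_shared_leaf:
  "binary_tree_based m TV par rt \<Longrightarrow> adjacent m TV par rt i j \<Longrightarrow>
    leaf_clause m TV par rt (shared_leaf TV par rt i j) = clause_vars TV par rt i j"
  unfolding leaf_clause_def using binary_tree_based_clause_vars_eq by blast

lemma to_root_Diff_start_Int_graph_leaves:
  assumes B: "binary_tree_based m TV par rt" and i: "i < m" and v: "v \<in> TV i"
  shows "(to_root (par i) (rt i) v - {v}) \<inter> graph_leaves m TV par rt = {}"
proof (rule ccontr)
  assume "\<not> ?thesis"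
  then obtain x k where x: "x \<in> to_root (par i) (rt i) v" "x \<noteq> v"
    and k: "k < m" "x \<in> tree_leaves TV par rt k"
    unfolding graph_leaves_def by auto
  have tree: "rooted_tree (TV i) (par i) (rt i)" by (rule binary_tree_based_rooted_tree[OF B i])
  have not_leaf: "x \<notin> tree_leaves TV par rt i" by (rule to_root_not_leaf[OF tree v x])
  with k have "k \<noteq> i" by auto
  have "x \<in> TV i \<inter> TV k"
    using to_root_subset[OF tree v] x(1) k(2) by (auto dest: in_leavesD)
  then have "x \<in> tree_leaves TV par rt i"
    using binary_tree_based_Int_subset_leaves[OF B i k(1)] \<open>k \<noteq> i\<close> by auto
  with not_leaf show False by contradiction
qed

lemma clause_vars_subset_graph_vertices:
  assumes B: "binary_tree_based m TV par rt" and adj: "adjacent m TV par rt i j"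
  shows "clause_vars TV par rt i j \<subseteq> graph_vertices m TV"
proof -
  have ij: "i < m" "j < m" using adj by (auto simp: adjacent_def)
  have "shared_leaf TV par rt i j \<in> TV i" "shared_leaf TV par rt i j \<in> TV j"
    using binary_tree_based_leaves_Int[OF B adj] by (auto dest: in_leavesD)
  then show ?thesis
    using to_root_subset[OF binary_tree_based_rooted_tree[OF B ij(1)]]
      to_root_subset[OF binary_tree_based_rooted_tree[OF B ij(2)]] ij
    unfolding clause_vars_def Let_def graph_vertices_def by blast
qed

lemma clause_vars_Int_graph_leaves:
  assumes B: "binary_tree_based m TV par rt" and adj: "adjacent m TV par rt i j"
  shows "clause_vars TV par rt i j \<inter> graph_leaves m TV par rt = {shared_leaf TV par rt i j}"
proof -
  have ij: "i < m" "j < m" using adj by (auto simp: adjacent_def)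
  have "shared_leaf TV par rt i j \<in> TV i" "shared_leaf TV par rt i j \<in> TV j"
    using binary_tree_based_leaves_Int[OF B adj] by (auto dest: in_leavesD)
  then have "(clause_vars TV par rt i j - {shared_leaf TV par rt i j}) \<inter> graph_leaves m TV par rt = {}"
    using to_root_Diff_start_Int_graph_leaves[OF B ij(1)] to_root_Diff_start_Int_graph_leaves[OF B ij(2)]
    unfolding clause_vars_def Let_def by blast
  then show ?thesis
    using shared_leaf_in_clause_vars shared_leaf_in_graph_leaves[OF B adj] by blast
qed

lemma clauses_eq_leaf_clauses:
  assumes B: "binary_tree_based m TV par rt"
  shows "{clause_vars TV par rt i j | i j. adjacent m TV par rt i j}
    = leaf_clause m TV par rt ` graph_leaves m TV par rt"
proof (intro subset_antisym subsetI)
  fix C assume "C \<in> {clause_vars TV par rt i j | i j. adjacent m TV par rt i j}"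
  then obtain i j where adj: "adjacent m TV par rt i j" and C: "C = clause_vars TV par rt i j" by blast
  then have "C = leaf_clause m TV par rt (shared_leaf TV par rt i j)"
    using leaf_clause_shared_leaf[OF B adj] by simp
  then show "C \<in> leaf_clause m TV par rt ` graph_leaves m TV par rt"
    using shared_leaf_in_graph_leaves[OF B adj] by blast
next
  fix C assume "C \<in> leaf_clause m TV par rt ` graph_leaves m TV par rt"
  then obtain l where l: "l \<in> graph_leaves m TV par rt" and C: "C = leaf_clause m TV par rt l" by blast
  obtain i j where adj: "adjacent m TV par rt i j" and "shared_leaf TV par rt i j = l"
    using graph_leaf_shared_leaf[OF B l] .
  then have "C = clause_vars TV par rt i j" using leaf_clause_shared_leaf[OF B adj] C by simp
  with adj show "C \<in> {clause_vars TV par rt i j | i j. adjacent m TV par rt i j}" by blast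
qed

lemma leaf_clause_subset_graph_vertices:
  assumes B: "binary_tree_based m TV par rt" and l: "l \<in> graph_leaves m TV par rt"
  shows "leaf_clause m TV par rt l \<subseteq> graph_vertices m TV"
proof -
  obtain i j where adj: "adjacent m TV par rt i j" and "shared_leaf TV par rt i j = l"
    using graph_leaf_shared_leaf[OF B l] .
  then show ?thesis
    using leaf_clause_shared_leaf[OF B adj] clause_vars_subset_graph_vertices[OF B adj] by simp
qed

lemma leaf_clause_Int_graph_leaves:
  assumes B: "binary_tree_based m TV par rt" and l: "l \<in> graph_leaves m TV par rt"
  shows "leaf_clause m TV par rt l \<inter> graph_leaves m TV par rt = {l}"
proof -
  obtain i j where adj: "adjacent m TV par rt i j" and "shared_leaf TV par rt i j = l"
    using graph_leaf_shared_leaf[OF B l] .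
  then show ?thesis
    using leaf_clause_shared_leaf[OF B adj] clause_vars_Int_graph_leaves[OF B adj] by simp
qed

lemma SAT_eq_literals_of:
  assumes B: "binary_tree_based m TV par rt"
  shows "SAT m TV par rt = literals_of (graph_vertices m TV) `
    {g \<in> PiE (graph_vertices m TV) (\<lambda>_. UNIV).
       \<forall>l\<in>graph_leaves m TV par rt. \<exists>x\<in>leaf_clause m TV par rt l. g x}"
proof -
  let ?V = "graph_vertices m TV"
  define sat where "sat S \<longleftrightarrow> (\<forall>i j. adjacent m TV par rt i j \<longrightarrow>
    (\<exists>x\<in>clause_vars TV par rt i j. (x, True) \<in> S))" for S
  have sat_literals_of: "sat (literals_of ?V g) \<longleftrightarrow>
      (\<forall>l\<in>graph_leaves m TV par rt. \<exists>x\<in>leaf_clause m TV par rt l. g x)" for g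
  proof -
    have "sat (literals_of ?V g) \<longleftrightarrow>
        (\<forall>C\<in>{clause_vars TV par rt i j | i j. adjacent m TV par rt i j}. \<exists>x\<in>C. g x)"
      using clause_vars_subset_graph_vertices[OF B] unfolding sat_def by fastforce
    then show ?thesis unfolding clauses_eq_leaf_clauses[OF B] by simp
  qed
  have "SAT m TV par rt = {S \<in> {S. consistent S \<and> Vars S = ?V}. sat S}"
    unfolding SAT_def sat_def by blast
  also have "\<dots> = {S \<in> literals_of ?V ` PiE ?V (\<lambda>_. UNIV). sat S}"
    unfolding consistent_total_eq_literals_of ..
  also have "\<dots> = literals_of ?V ` {g \<in> PiE ?V (\<lambda>_. UNIV). sat (literals_of ?V g)}"
    by blast
  finally show ?thesis by (simp only: sat_literals_of)
qed

lemma Fix_literals_of: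
  assumes B: "binary_tree_based m TV par rt"
  shows "Fix m TV par rt (literals_of (graph_vertices m TV) g) = literals_of
    {l\<in>graph_leaves m TV par rt. g l \<and> (\<forall>x\<in>leaf_clause m TV par rt l - {l}. \<not> g x)} g"
    (is "Fix m TV par rt (literals_of ?V g) = literals_of ?F g")
proof (intro subset_antisym subsetI)
  fix z assume "z \<in> Fix m TV par rt (literals_of ?V g)"
  then obtain i j where adj: "adjacent m TV par rt i j" and z: "z = (shared_leaf TV par rt i j, True)"
    and fixed: "(shared_leaf TV par rt i j, True) \<in> literals_of ?V g"
      "\<forall>x \<in> clause_vars TV par rt i j - {shared_leaf TV par rt i j}. (x, False) \<in> literals_of ?V g"
    unfolding Fix_def by blast
  then show "z \<in> literals_of ?F g"
    using leaf_clause_shared_leaf[OF B adj] shared_leaf_in_graph_leaves[OF B adj] by auto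
next
  fix z assume "z \<in> literals_of ?F g"
  then obtain l where z: "z = (l, True)" and l: "l \<in> graph_leaves m TV par rt"
    and fixed: "g l" "\<forall>x\<in>leaf_clause m TV par rt l - {l}. \<not> g x"
    unfolding literals_of_def by auto
  obtain i j where adj: "adjacent m TV par rt i j" and shared: "shared_leaf TV par rt i j = l"
    using graph_leaf_shared_leaf[OF B l] .
  have "l \<in> ?V" "clause_vars TV par rt i j \<subseteq> ?V"
    using clause_vars_subset_graph_vertices[OF B adj] shared_leaf_in_clause_vars[of TV par rt i j] shared
    by auto
  then show "z \<in> Fix m TV par rt (literals_of ?V g)"
    using fixed adj shared leaf_clause_shared_leaf[OF B adj] unfolding Fix_def z by auto
qed

theorem proposition1:
  fixes m :: nat and TV :: "nat \<Rightarrow> 'v set" and par :: "nat \<Rightarrow> 'v \<Rightarrow> 'v" and rt :: "nat \<Rightarrow> 'v"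
  assumes "binary_tree_based m TV par rt"
  shows "(\<Sum>S \<in> SAT m TV par rt. (1/2 :: real) ^ card (S - Fix m TV par rt S)) = 1"
proof -
  let ?V = "graph_vertices m TV" and ?L = "graph_leaves m TV par rt" and ?C = "leaf_clause m TV par rt"
  let ?G = "{g \<in> PiE ?V (\<lambda>_. UNIV). \<forall>l\<in>?L. \<exists>x\<in>?C l. g x}"
  have "(\<Sum>S \<in> SAT m TV par rt. (1/2 :: real) ^ card (S - Fix m TV par rt S))
      = (\<Sum>g\<in>?G. (1/2) ^ card (literals_of ?V g - Fix m TV par rt (literals_of ?V g)))"
    unfolding SAT_eq_literals_of[OF assms]
    by (rule sum.reindex[OF inj_on_subset[OF inj_on_literals_of], unfolded comp_def]) blast
  also have "\<dots> = (\<Sum>g\<in>?G. (1/2) ^ card (?V - {l\<in>?L. g l \<and> (\<forall>x\<in>?C l - {l}. \<not> g x)}))"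
    by (simp only: Fix_literals_of[OF assms] literals_of_Diff card_literals_of)
  also have "\<dots> = 1"
    using finite_graph_vertices[OF assms] graph_leaves_subset_graph_vertices
      leaf_clause_subset_graph_vertices[OF assms] leaf_clause_Int_graph_leaves[OF assms]
    by (rule sum_half_power_unfixed_private_clauses)
  finally show ?thesis .
qed

end
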